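(* Let $G=(V,E)$ be a finite weakly connected directed graph whose condensation $\mathbb G$ has exactly one sink vertex. Let $\mathcal H=\mathbb C^{V}$ with orthonormal basis $\{|v\rangle : v\in V\}$ and let $\mathcal L=\{c_{(v,w)}|w\rangle\langle v| : (v,w)\in E\}$ for arbitrary nonzero constants $c_{(v,w)}\in\mathbb C\setminus\{0\}$. Then for an arbitrary Hermitian operator $H$ on $\mathcal H$, the GKSL evolution $$\frac{d}{dt}\varrho=-\mathrm i[H,\varrho]+\sum_{L\in\mathcal L}\Big(L\varrho L^\dagger-\tfrac12\{L^\dagger L,\varrho\}\Big)$$ is relaxing, i.e. it has a unique stationary state.
   Context: A digraph is weakly connected if its underlying undirected graph is connected. The condensation $\mathbb G$ of $G$ is the directed graph whose vertices are the maximal strongly connected components of $G$, with an arc from component $\mathbf v$ to component $\mathbf w\ne\mathbf v$ iff there exist $v\in\mathbf v$, $w\in\mathbf w$ with $(v,w)\in E$; it is acyclic. A sink vertex is a vertex of outdegree zero. A stationary state is a density matrix $\varrho$ with right-hand side equal to $0$; relaxing means the stationary state is unique. $\{A,B\}=AB+BA$. *)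

theory Defs
  imports "HOL-Analysis.Analysis"
begin

text \<open>Operators on H = C^V are represented as complex matrices indexed by the finite
vertex type 'v (the basis vector |v> corresponds to index v).\<close>

definition mscale :: "complex \<Rightarrow> complex^'v^'v \<Rightarrow> complex^'v^'v" where
  "mscale a A = (\<chi> i j. a * A $ i $ j)"

definition adjoint :: "complex^'v^'v \<Rightarrow> complex^'v^'v" where
  "adjoint A = (\<chi> i j. cnj (A $ j $ i))"

definition hermitian :: "complex^'v^'v \<Rightarrow> bool" where
  "hermitian A \<longleftrightarrow> adjoint A = A"

definition mtrace :: "complex^'v::finite^'v \<Rightarrow> complex" where
  "mtrace A = (\<Sum>i\<in>UNIV. A $ i $ i)"

definition positive_semidef :: "complex^'v::finite^'v \<Rightarrow> bool" where
  "positive_semidef A \<longleftrightarrow> (\<forall>x::complex^'v. 0 \<le> Re (\<Sum>i\<in>UNIV. cnj (x $ i) * (A *v x) $ i))"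

definition density_matrix :: "complex^'v::finite^'v \<Rightarrow> bool" where
  "density_matrix \<rho> \<longleftrightarrow> hermitian \<rho> \<and> positive_semidef \<rho> \<and> mtrace \<rho> = 1"

definition ketbra :: "'v \<Rightarrow> 'v \<Rightarrow> complex^'v^'v" where
  "ketbra w v = (\<chi> i j. if i = w \<and> j = v then 1 else 0)"

definition commutator :: "complex^'v::finite^'v \<Rightarrow> complex^'v^'v \<Rightarrow> complex^'v^'v" where
  "commutator A B = A ** B - B ** A"

definition anticommutator :: "complex^'v::finite^'v \<Rightarrow> complex^'v^'v \<Rightarrow> complex^'v^'v" where
  "anticommutator A B = A ** B + B ** A"

definition gksl :: "complex^'v::finite^'v \<Rightarrow> (complex^'v^'v) set \<Rightarrow> complex^'v^'v \<Rightarrow> complex^'v^'v" where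
  "gksl H Ls \<rho> = mscale (- \<i>) (commutator H \<rho>)
     + (\<Sum>L\<in>Ls. L ** \<rho> ** adjoint L - mscale (1/2) (anticommutator (adjoint L ** L) \<rho>))"

definition stationary_state :: "complex^'v::finite^'v \<Rightarrow> (complex^'v^'v) set \<Rightarrow> complex^'v^'v \<Rightarrow> bool" where
  "stationary_state H Ls \<rho> \<longleftrightarrow> density_matrix \<rho> \<and> gksl H Ls \<rho> = 0"

definition relaxing :: "complex^'v::finite^'v \<Rightarrow> (complex^'v^'v) set \<Rightarrow> bool" where
  "relaxing H Ls \<longleftrightarrow> (\<exists>!\<rho>. stationary_state H Ls \<rho>)"

text \<open>Graph notions for a digraph with vertex set UNIV :: 'v set and arc set E.\<close>
definition weakly_connected :: "('v \<times> 'v) set \<Rightarrow> bool" where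
  "weakly_connected E \<longleftrightarrow> (\<forall>u v. (u, v) \<in> (E \<union> E\<inverse>)\<^sup>*)"

definition scc_of :: "('v \<times> 'v) set \<Rightarrow> 'v \<Rightarrow> 'v set" where
  "scc_of E v = {w. (v, w) \<in> E\<^sup>* \<and> (w, v) \<in> E\<^sup>*}"

definition sccs :: "('v \<times> 'v) set \<Rightarrow> 'v set set" where
  "sccs E = range (scc_of E)"

text \<open>A component is a sink of the condensation iff no arc leaves it.\<close>
definition condensation_sink :: "('v \<times> 'v) set \<Rightarrow> 'v set \<Rightarrow> bool" where
  "condensation_sink E C \<longleftrightarrow> C \<in> sccs E \<and> (\<forall>v w. v \<in> C \<and> (v, w) \<in> E \<longrightarrow> w \<in> C)"

end

theory Submission
  imports Defs
begin

lemma mscale_nth [simp]: "mscale a A $ i $ j = a * A $ i $ j"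
  by (simp add: mscale_def)

lemma mscale_zero [simp]: "mscale a 0 = 0"
  by (simp add: vec_eq_iff)

lemma adjoint_nth [simp]: "adjoint A $ i $ j = cnj (A $ j $ i)"
  by (simp add: adjoint_def)

lemma ketbra_nth [simp]: "ketbra w v $ i $ j = (if i = w \<and> j = v then 1 else 0)"
  by (simp add: ketbra_def)

lemma matrix_mult_nth: "(A ** B) $ i $ j = (\<Sum>k\<in>UNIV. A $ i $ k * B $ k $ j)"
  by (simp add: matrix_matrix_mult_def)

lemma matrix_add_rdistrib: "(A + B) ** C = A ** C + B ** (C :: 'a::semiring_1^'n^'n)"
  by (simp add: vec_eq_iff matrix_mult_nth distrib_right sum.distrib)

lemma mscale_matrix_mult: "mscale a A ** B = mscale a (A ** B)"
  by (simp add: vec_eq_iff matrix_mult_nth sum_distrib_left mult.assoc)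

lemma matrix_mult_mscale: "A ** mscale a B = mscale a (A ** B)"
  by (simp add: vec_eq_iff matrix_mult_nth sum_distrib_left mult_ac)

lemma scaleR_eq_mscale: "r *\<^sub>R A = mscale (of_real r) (A :: complex^'n^'n)"
  by (simp add: vec_eq_iff del: scaleR_vec_def) (simp add: scaleR_conv_of_real)

lemma adjoint_adjoint [simp]: "adjoint (adjoint A) = A"
  by (simp add: vec_eq_iff)

lemma adjoint_add: "adjoint (A + B) = adjoint A + adjoint B"
  by (simp add: vec_eq_iff)

lemma adjoint_diff: "adjoint (A - B) = adjoint A - adjoint B"
  by (simp add: vec_eq_iff)

lemma adjoint_mscale: "adjoint (mscale a A) = mscale (cnj a) (adjoint A)"
  by (simp add: vec_eq_iff)

lemma adjoint_sum: "adjoint (\<Sum>x\<in>S. f x) = (\<Sum>x\<in>S. adjoint (f x))"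
  by (simp add: vec_eq_iff adjoint_def)

lemma adjoint_mult: "adjoint (A ** B) = adjoint B ** adjoint A"
  by (simp add: vec_eq_iff matrix_mult_nth mult.commute)

lemma adjoint_identity [simp]: "adjoint (mat 1) = mat 1"
  by (simp add: vec_eq_iff mat_def)

lemma hermitian_diag: "hermitian A \<Longrightarrow> cnj (A $ i $ i) = A $ i $ i"
  by (metis adjoint_nth hermitian_def)

lemma hermitian_add: "hermitian A \<Longrightarrow> hermitian B \<Longrightarrow> hermitian (A + B)"
  by (simp add: hermitian_def adjoint_add)

lemma hermitian_real_mscale: "hermitian A \<Longrightarrow> hermitian (mscale (of_real r) A)"
  by (simp add: hermitian_def adjoint_mscale)

lemma hermitian_sandwich: "hermitian A \<Longrightarrow> hermitian (B ** A ** adjoint B)"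
  by (simp add: hermitian_def adjoint_mult matrix_mul_assoc)

lemma mtrace_add: "mtrace (A + B) = mtrace A + mtrace B"
  by (simp add: mtrace_def sum.distrib)

lemma mtrace_mscale: "mtrace (mscale a A) = a * mtrace A"
  by (simp add: mtrace_def sum_distrib_left)

lemma mtrace_hermitian_real: "hermitian A \<Longrightarrow> mtrace A = of_real (Re (mtrace A))"
proof -
  assume "hermitian A"
  then have "cnj (mtrace A) = mtrace A"
    by (simp add: mtrace_def hermitian_diag)
  then show ?thesis
    by (simp add: complex_eq_iff)
qed


definition cinner :: "complex^'n \<Rightarrow> complex^'n \<Rightarrow> complex" where
  "cinner x y = (\<Sum>i\<in>UNIV. cnj (x $ i) * y $ i)"

lemma positive_semidef_cinner: "positive_semidef A \<longleftrightarrow> (\<forall>x. 0 \<le> Re (cinner x (A *v x)))"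
  by (simp add: positive_semidef_def cinner_def)

lemma cinner_matrix_vector: "cinner x (A *v y) = (\<Sum>i\<in>UNIV. \<Sum>j\<in>UNIV. cnj (x $ i) * A $ i $ j * y $ j)"
  by (simp add: cinner_def matrix_vector_mult_def sum_distrib_left mult.assoc)

lemma cinner_adjoint: "cinner x (A *v y) = cinner (adjoint A *v x) y"
  unfolding cinner_matrix_vector
  by (subst sum.swap) (simp add: cinner_def matrix_vector_mult_def sum_distrib_left sum_distrib_right mult_ac)

lemma cinner_add_left: "cinner (x + y) z = cinner x z + cinner y z"
  by (simp add: cinner_def algebra_simps sum.distrib)

lemma cinner_add_right: "cinner x (y + z) = cinner x y + cinner x z"
  by (simp add: cinner_def algebra_simps sum.distrib)

lemma cinner_scale_left: "cinner (a *s x) y = cnj a * cinner x y"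
  by (simp add: cinner_def sum_distrib_left mult_ac)

lemma cinner_scale_right: "cinner x (a *s y) = a * cinner x y"
  by (simp add: cinner_def sum_distrib_left mult_ac)

lemma cinner_diff_right: "cinner x (y - z) = cinner x y - cinner x z"
  by (simp add: cinner_def algebra_simps sum_subtractf)

lemma cinner_minus_right: "cinner x (- y) = - cinner x y"
  by (simp add: cinner_def sum_negf)

lemma cinner_sum_right: "cinner x (\<Sum>i\<in>S. f i) = (\<Sum>i\<in>S. cinner x (f i))"
  by (simp add: cinner_def sum_distrib_left sum.swap[of _ S])

lemma cinner_zero_left [simp]: "cinner 0 x = 0"
  by (simp add: cinner_def)

lemma cinner_zero_right [simp]: "cinner x 0 = 0"
  by (simp add: cinner_def)

lemma Re_cnj_mult_self: "Re (cnj z * z) = (cmod z)\<^sup>2"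
  by (simp add: cmod_power2) (simp add: power2_eq_square)

lemma Re_cinner_self: "Re (cinner x x) = (norm x)\<^sup>2"
  unfolding cinner_def Re_sum Re_cnj_mult_self norm_vec_def L2_set_def
  by (simp add: sum_nonneg)

lemma cinner_axis_left: "cinner (axis i 1) x = x $ i"
proof -
  have "cnj (axis i 1 $ k) * x $ k = (if k = i then x $ k else 0)" for k
    by (simp add: axis_def)
  then show ?thesis
    by (simp add: cinner_def)
qed

lemma matrix_vector_mult_axis: "(A *v axis j 1) $ i = A $ i $ j"
  by (simp add: matrix_vector_mult_def axis_def if_distrib cong: if_cong)

lemma cinner_axis_axis: "cinner (axis i 1) (A *v axis j 1) = A $ i $ j"
  by (simp add: cinner_axis_left matrix_vector_mult_axis)

lemma matrix_vector_mult_scale: "A *v (a *s x) = a *s (A *v x :: complex^'n)"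
  by (auto simp: vec_eq_iff matrix_vector_mult_def sum_distrib_left intro!: sum.cong)

lemma sum_matrix_vector_mult: "(\<Sum>x\<in>S. f x) *v y = (\<Sum>x\<in>S. f x *v y)"
  by (simp add: vec_eq_iff matrix_vector_mult_def sum_distrib_right sum.swap[of _ S])

lemma mscale_matrix_vector_mult: "mscale a A *v y = a *s (A *v y)"
  by (simp add: vec_eq_iff matrix_vector_mult_def sum_distrib_left mult.assoc)

lemma positive_semidef_diag: "positive_semidef A \<Longrightarrow> 0 \<le> Re (A $ i $ i)"
  by (metis cinner_axis_axis positive_semidef_cinner)

lemma linear_coeff_zero_if_quadratic_nonneg:
  fixes a b :: real
  assumes "\<And>t. 0 \<le> t * a + t\<^sup>2 * b"
  shows "a = 0"
proof (rule ccontr)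
  assume "a \<noteq> 0"
  define c where "c = \<bar>b\<bar> + 1"
  have "c > 0" "b < c"
    by (simp_all add: c_def)
  define t where "t = - a / c"
  have "t * a + t\<^sup>2 * b = a\<^sup>2 * (b - c) / c\<^sup>2"
    unfolding t_def using \<open>c > 0\<close> by (simp add: field_simps power2_eq_square)
  also have "\<dots> < 0"
    using \<open>a \<noteq> 0\<close> \<open>b < c\<close> \<open>c > 0\<close> by (intro divide_neg_pos mult_pos_neg) auto
  finally show False
    using assms[of t] by linarith
qed


lemma positive_semidef_kernel:
  assumes "hermitian B" "positive_semidef B" "Re (cinner y (B *v y)) = 0"
  shows "B *v y = 0"
proof -
  define z where "z = B *v y"
  have yz: "cinner y (B *v z) = cinner z z"
    using assms(1) by (simp add: cinner_adjoint hermitian_def z_def)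
  have "0 \<le> t * (2 * (norm z)\<^sup>2) + t\<^sup>2 * Re (cinner z (B *v z))" for t :: real
  proof -
    have "cinner (y + of_real t *s z) (B *v (y + of_real t *s z))
        = cinner y (B *v y) + of_real t * (cinner y (B *v z) + cinner z z) + (of_real t)\<^sup>2 * cinner z (B *v z)"
      by (simp add: matrix_vector_right_distrib matrix_vector_mult_scale cinner_add_left cinner_add_right
          cinner_scale_left cinner_scale_right algebra_simps power2_eq_square flip: z_def)
    then have "Re (cinner (y + of_real t *s z) (B *v (y + of_real t *s z)))
        = t * (2 * (norm z)\<^sup>2) + t\<^sup>2 * Re (cinner z (B *v z))"
      using assms(3) yz by (simp add: Re_cinner_self flip: of_real_power)
    then show ?thesis
      using assms(2) unfolding positive_semidef_cinner by metis
  qed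
  then have "2 * (norm z)\<^sup>2 = 0"
    by (rule linear_coeff_zero_if_quadratic_nonneg)
  then show ?thesis
    by (simp add: z_def)
qed


lemma positive_semidef_antisym:
  assumes "hermitian B" "positive_semidef B" "positive_semidef (- B)"
  shows "B = 0"
proof -
  have "Re (cinner x (B *v x)) = 0" for x
  proof -
    have "Re (cinner x ((- B) *v x)) = - Re (cinner x (B *v x))"
      by (simp add: cinner_matrix_vector sum_negf)
    then show ?thesis
      using assms(2,3) unfolding positive_semidef_cinner by (metis neg_0_le_iff_le order_antisym)
  qed
  then have "B *v x = 0" for x
    by (rule positive_semidef_kernel[OF assms(1,2)])
  then show ?thesis
    by (metis matrix_vector_mult_axis vec_eq_iff zero_index)
qed

lemma Re_cinner_scaleR: "Re (cinner (r *\<^sub>R x) (A *v (r *\<^sub>R x))) = r\<^sup>2 * Re (cinner x (A *v x))"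
proof -
  have "r *\<^sub>R x = of_real r *s x"
    by (simp add: vec_eq_iff) (simp add: scaleR_conv_of_real)
  then show ?thesis
    by (simp add: matrix_vector_mult_scale cinner_scale_left cinner_scale_right power2_eq_square)
qed

lemma hermitian_top_eigenvalue:
  fixes A :: "complex^'n^'n"
  assumes "hermitian A"
  obtains \<mu> :: real and x where "x \<noteq> 0" "positive_semidef (\<mu> *\<^sub>R mat 1 - A)" "(\<mu> *\<^sub>R mat 1 - A) *v x = 0"
proof -
  define f where "f y = Re (cinner y (A *v y))" for y
  have "continuous_on (sphere 0 1) f"
    unfolding f_def cinner_matrix_vector by (intro continuous_intros)
  moreover have "sphere (0 :: complex^'n) 1 \<noteq> {}"
    by simp
  ultimately obtain x where x: "x \<in> sphere 0 1" and max: "\<And>y. y \<in> sphere 0 1 \<Longrightarrow> f y \<le> f x"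
    using continuous_attains_sup[OF compact_sphere] by blast
  have bound: "f y \<le> f x * (norm y)\<^sup>2" for y
  proof (cases "y = 0")
    case False
    have "f y = (norm y)\<^sup>2 * f ((1 / norm y) *\<^sub>R y)"
      using False by (simp add: f_def Re_cinner_scaleR power2_eq_square)
    also have "\<dots> \<le> (norm y)\<^sup>2 * f x"
      using False by (intro mult_left_mono max) auto
    finally show ?thesis
      by (simp add: mult.commute)
  qed (simp add: f_def)
  define B where "B = f x *\<^sub>R mat 1 - A"
  have qB: "Re (cinner y (B *v y)) = f x * (norm y)\<^sup>2 - f y" for y
    by (simp add: B_def f_def scaleR_eq_mscale matrix_vector_mult_diff_rdistrib mscale_matrix_vector_mult
        cinner_diff_right cinner_scale_right Re_cinner_self)
  have "positive_semidef B"
    using bound by (simp add: positive_semidef_cinner qB)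
  moreover have "hermitian B"
    using assms by (simp add: B_def hermitian_def adjoint_diff scaleR_eq_mscale adjoint_mscale)
  moreover have "Re (cinner x (B *v x)) = 0"
    using x by (simp add: qB)
  ultimately have "B *v x = 0"
    by (intro positive_semidef_kernel)
  moreover have "x \<noteq> 0"
    using x by auto
  ultimately show ?thesis
    using that \<open>positive_semidef B\<close> unfolding B_def by blast
qed

lemma positive_semidef_add:
  "positive_semidef A \<Longrightarrow> positive_semidef B \<Longrightarrow> positive_semidef (A + B)"
  by (simp add: positive_semidef_cinner matrix_vector_mult_add_rdistrib cinner_add_right add_nonneg_nonneg)

lemma cinner_mscale: "cinner x (mscale a A *v y) = a * cinner x (A *v y)"
  by (simp add: cinner_matrix_vector sum_distrib_left mult_ac)

lemma positive_semidef_real_mscale: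
  assumes "positive_semidef A" "0 \<le> r"
  shows "positive_semidef (mscale (of_real r) A)"
proof -
  have "Re (cinner x (mscale (of_real r) A *v x)) = r * Re (cinner x (A *v x))" for x
    by (simp add: cinner_mscale)
  then show ?thesis
    using assms by (simp add: positive_semidef_cinner)
qed

lemma cinner_sandwich:
  "cinner x ((B ** A ** adjoint B) *v x) = cinner (adjoint B *v x) (A *v (adjoint B *v x))"
  by (simp add: cinner_adjoint[of x B] flip: matrix_vector_mul_assoc)

lemma positive_semidef_sandwich: "positive_semidef A \<Longrightarrow> positive_semidef (B ** A ** adjoint B)"
  by (simp add: positive_semidef_cinner cinner_sandwich)

lemma positive_semidef_zero: "positive_semidef 0"
  by (simp add: positive_semidef_cinner)

lemma positive_semidef_sum:
  "(\<And>x. x \<in> S \<Longrightarrow> positive_semidef (f x)) \<Longrightarrow> positive_semidef (\<Sum>x\<in>S. f x)"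
  by (induction S rule: infinite_finite_induct)
    (simp_all add: positive_semidef_add positive_semidef_zero)

lemma positive_semidef_mtrace: "positive_semidef A \<Longrightarrow> 0 \<le> Re (mtrace A)"
  by (simp add: mtrace_def Re_sum sum_nonneg positive_semidef_diag)

lemma density_matrix_normalize:
  assumes "hermitian A" "positive_semidef A" "Re (mtrace A) > 0"
  shows "density_matrix ((1 / Re (mtrace A)) *\<^sub>R A)"
proof -
  have "mtrace (mscale (of_real (1 / Re (mtrace A))) A) = of_real (1 / Re (mtrace A)) * of_real (Re (mtrace A))"
    by (metis mtrace_mscale mtrace_hermitian_real[OF assms(1)])
  also have "\<dots> = 1"
    using assms(3) by (simp flip: of_real_mult)
  finally have "mtrace (mscale (of_real (1 / Re (mtrace A))) A) = 1" .
  then show ?thesis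
    unfolding density_matrix_def scaleR_eq_mscale using assms
    by (simp add: hermitian_real_mscale positive_semidef_real_mscale del: of_real_divide)
qed

lemma cinner_axis_right: "cinner x (axis i 1) = cnj (x $ i)"
proof -
  have "cnj (x $ k) * axis i 1 $ k = (if k = i then cnj (x $ k) else 0)" for k
    by (simp add: axis_def)
  then show ?thesis
    by (simp add: cinner_def)
qed

lemma matrix_vector_mult_ketbra: "ketbra w v *v y = (y $ v) *s axis w 1"
proof -
  have "(if i = w \<and> j = v then 1 else 0) * y $ j = (if j = v then (if i = w then y $ v else 0) else 0)"
    for i j
    by simp
  then show ?thesis
    by (simp add: vec_eq_iff matrix_vector_mult_def axis_def)
qed

lemma density_matrix_ketbra: "density_matrix (ketbra v v)"
proof -
  have "cinner x (ketbra v v *v x) = cnj (x $ v) * x $ v" for x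
    by (simp add: matrix_vector_mult_ketbra cinner_scale_right cinner_axis_right)
  then show ?thesis
    by (auto simp: density_matrix_def hermitian_def positive_semidef_cinner Re_cnj_mult_self
        mtrace_def vec_eq_iff)
qed


lemma positive_semidef_offdiag_bound:
  assumes "hermitian B" "positive_semidef B"
  shows "2 * cmod (B $ i $ j) \<le> Re (B $ i $ i) + Re (B $ j $ j)"
proof (cases "B $ i $ j = 0")
  case True
  then show ?thesis
    using assms(2) by (simp add: add_nonneg_nonneg positive_semidef_diag)
next
  case False
  define t where "t = - cnj (B $ i $ j) / cmod (B $ i $ j)"
  have Bji: "B $ j $ i = cnj (B $ i $ j)"
    using assms(1) by (metis adjoint_nth hermitian_def)
  have tt: "cnj t * t = 1"
    using False by (simp add: t_def complex_norm_square[symmetric] field_simps power2_eq_square)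
  have tB: "t * B $ i $ j = - cmod (B $ i $ j)"
    using False by (simp add: t_def field_simps power2_eq_square flip: complex_norm_square of_real_mult)
  define x where "x = axis i 1 + t *s axis j 1"
  have "cinner x (B *v x) = B $ i $ i + cnj t * t * B $ j $ j + t * B $ i $ j + cnj (t * B $ i $ j)"
    by (simp add: x_def matrix_vector_right_distrib matrix_vector_mult_scale cinner_add_left
        cinner_add_right cinner_scale_left cinner_scale_right cinner_axis_axis Bji algebra_simps)
  also have "\<dots> = B $ i $ i + B $ j $ j - 2 * cmod (B $ i $ j)"
    unfolding tt tB by simp
  finally have "Re (cinner x (B *v x)) = Re (B $ i $ i) + Re (B $ j $ j) - 2 * cmod (B $ i $ j)"
    by simp
  then show ?thesis
    using assms(2) unfolding positive_semidef_cinner by (metis diff_ge_0_iff_ge)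
qed


lemma density_matrix_entry_bound:
  assumes "density_matrix B"
  shows "cmod (B $ i $ j) \<le> 1"
proof -
  have B: "hermitian B" "positive_semidef B" "mtrace B = 1"
    using assms by (simp_all add: density_matrix_def)
  have "(\<Sum>k\<in>UNIV. Re (B $ k $ k)) = 1"
    using B(3) by (simp add: mtrace_def flip: Re_sum)
  then have diag: "Re (B $ k $ k) \<le> 1" for k
    using member_le_sum[of k UNIV "\<lambda>k. Re (B $ k $ k)"] positive_semidef_diag[OF B(2)] by simp
  show ?thesis
    using positive_semidef_offdiag_bound[OF B(1,2), of i j] diag[of i] diag[of j] by simp
qed

lemma compact_density_matrices: "compact {B :: complex^'n^'n. density_matrix B}"
proof -
  have "norm B \<le> real CARD('n) * real CARD('n)" if "density_matrix B" for B :: "complex^'n^'n"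
  proof -
    have "norm B \<le> (\<Sum>i\<in>UNIV. norm (B $ i))"
      unfolding norm_vec_def by (rule L2_set_le_sum) simp
    also have "\<dots> \<le> (\<Sum>i\<in>UNIV. \<Sum>j\<in>UNIV. cmod (B $ i $ j))"
      by (intro sum_mono) (unfold norm_vec_def, rule L2_set_le_sum, simp)
    also have "\<dots> \<le> (\<Sum>i\<in>(UNIV::'n set). \<Sum>j\<in>(UNIV::'n set). 1)"
      by (intro sum_mono density_matrix_entry_bound that)
    finally show ?thesis
      by simp
  qed
  then have "bounded {B :: complex^'n^'n. density_matrix B}"
    unfolding bounded_iff by blast
  moreover have "{B :: complex^'n^'n. density_matrix B} =
      {B. adjoint B = B} \<inter> (\<Inter>x. {B. 0 \<le> Re (cinner x (B *v x))}) \<inter> {B. mtrace B = 1}"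
    by (auto simp: density_matrix_def hermitian_def positive_semidef_cinner)
  moreover have "closed \<dots>"
    unfolding adjoint_def cinner_matrix_vector mtrace_def
    by (intro closed_Int closed_INT ballI closed_Collect_eq closed_Collect_le continuous_intros)
  ultimately show ?thesis
    by (simp add: compact_eq_bounded_closed)
qed

lemma convex_density_matrices: "convex {B :: complex^'n^'n. density_matrix B}"
proof (rule convexI)
  fix A B :: "complex^'n^'n" and u v :: real
  assume "A \<in> {B. density_matrix B}" "B \<in> {B. density_matrix B}" "0 \<le> u" "0 \<le> v" "u + v = 1"
  then show "u *\<^sub>R A + v *\<^sub>R B \<in> {B. density_matrix B}"
    by (simp add: density_matrix_def scaleR_eq_mscale hermitian_add hermitian_real_mscale
        positive_semidef_add positive_semidef_real_mscale mtrace_add mtrace_mscale flip: of_real_add)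
qed


lemma matrix_diff_ldistrib: "A ** (B - C) = A ** B - A ** (C :: 'a::ring_1^'n^'n)"
  by (simp add: vec_eq_iff matrix_mult_nth right_diff_distrib sum_subtractf)

lemma matrix_diff_rdistrib: "(A - B) ** C = A ** C - B ** (C :: 'a::ring_1^'n^'n)"
  by (simp add: vec_eq_iff matrix_mult_nth left_diff_distrib sum_subtractf)

lemma sum_matrix_mult: "(\<Sum>x\<in>S. f x) ** A = (\<Sum>x\<in>S. f x ** (A :: 'a::semiring_1^'n^'n))"
  by (simp add: vec_eq_iff matrix_mult_nth sum_distrib_right sum.swap[of _ S])

lemma matrix_mult_sum: "A ** (\<Sum>x\<in>S. f x) = (\<Sum>x\<in>S. A ** (f x :: 'a::semiring_1^'n^'n))"
  by (simp add: vec_eq_iff matrix_mult_nth sum_distrib_left sum.swap[of _ S])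

definition hs_inner :: "complex^'n^'n \<Rightarrow> complex^'n^'n \<Rightarrow> complex" where
  "hs_inner A B = (\<Sum>i\<in>UNIV. \<Sum>j\<in>UNIV. cnj (A $ i $ j) * B $ i $ j)"

lemma inner_eq_Re_hs_inner: "inner A B = Re (hs_inner A B)"
  by (simp add: inner_vec_def hs_inner_def inner_complex_def Re_sum)

lemma hs_inner_add_left: "hs_inner (A + B) C = hs_inner A C + hs_inner B C"
  by (simp add: hs_inner_def algebra_simps sum.distrib)

lemma hs_inner_add_right: "hs_inner A (B + C) = hs_inner A B + hs_inner A C"
  by (simp add: hs_inner_def algebra_simps sum.distrib)

lemma hs_inner_diff_left: "hs_inner (A - B) C = hs_inner A C - hs_inner B C"
  by (simp add: hs_inner_def algebra_simps sum_subtractf)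

lemma hs_inner_diff_right: "hs_inner A (B - C) = hs_inner A B - hs_inner A C"
  by (simp add: hs_inner_def algebra_simps sum_subtractf)

lemma hs_inner_mscale_left: "hs_inner (mscale a A) B = cnj a * hs_inner A B"
  by (simp add: hs_inner_def sum_distrib_left mult_ac)

lemma hs_inner_mscale_right: "hs_inner A (mscale a B) = a * hs_inner A B"
  by (simp add: hs_inner_def sum_distrib_left mult_ac)

lemma hs_inner_sum_left: "hs_inner (\<Sum>x\<in>S. f x) B = (\<Sum>x\<in>S. hs_inner (f x) B)"
  by (simp add: hs_inner_def sum_distrib_right sum.swap[of _ S])

lemma hs_inner_sum_right: "hs_inner A (\<Sum>x\<in>S. f x) = (\<Sum>x\<in>S. hs_inner A (f x))"
  by (simp add: hs_inner_def sum_distrib_left sum.swap[of _ S])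

lemma hs_inner_mult_left: "hs_inner A (B ** C) = hs_inner (adjoint B ** A) C"
proof -
  have "hs_inner A (B ** C) = (\<Sum>i\<in>UNIV. \<Sum>j\<in>UNIV. \<Sum>k\<in>UNIV. cnj (A $ i $ j) * B $ i $ k * C $ k $ j)"
    by (simp add: hs_inner_def matrix_mult_nth sum_distrib_left mult.assoc)
  also have "\<dots> = (\<Sum>i\<in>UNIV. \<Sum>k\<in>UNIV. \<Sum>j\<in>UNIV. cnj (A $ i $ j) * B $ i $ k * C $ k $ j)"
    by (rule sum.cong[OF refl], rule sum.swap)
  also have "\<dots> = (\<Sum>k\<in>UNIV. \<Sum>i\<in>UNIV. \<Sum>j\<in>UNIV. cnj (A $ i $ j) * B $ i $ k * C $ k $ j)"
    by (rule sum.swap)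
  also have "\<dots> = (\<Sum>k\<in>UNIV. \<Sum>j\<in>UNIV. \<Sum>i\<in>UNIV. cnj (A $ i $ j) * B $ i $ k * C $ k $ j)"
    by (rule sum.cong[OF refl], rule sum.swap)
  also have "\<dots> = hs_inner (adjoint B ** A) C"
    by (simp add: hs_inner_def matrix_mult_nth sum_distrib_right sum_distrib_left mult_ac)
  finally show ?thesis .
qed

lemma hs_inner_mult_right: "hs_inner A (B ** C) = hs_inner (A ** adjoint C) B"
proof -
  have "hs_inner A (B ** C) = (\<Sum>i\<in>UNIV. \<Sum>j\<in>UNIV. \<Sum>k\<in>UNIV. cnj (A $ i $ j) * B $ i $ k * C $ k $ j)"
    by (simp add: hs_inner_def matrix_mult_nth sum_distrib_left mult.assoc)
  also have "\<dots> = (\<Sum>i\<in>UNIV. \<Sum>k\<in>UNIV. \<Sum>j\<in>UNIV. cnj (A $ i $ j) * B $ i $ k * C $ k $ j)"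
    by (rule sum.cong[OF refl], rule sum.swap)
  also have "\<dots> = hs_inner (A ** adjoint C) B"
    by (simp add: hs_inner_def matrix_mult_nth sum_distrib_right sum_distrib_left mult_ac)
  finally show ?thesis .
qed

lemma hs_inner_identity_left: "hs_inner (mat 1) A = mtrace A"
  by (simp add: hs_inner_def mtrace_def mat_def if_distrib if_distribR cong: if_cong)


definition gksl_dual :: "complex^'n^'n \<Rightarrow> (complex^'n^'n) set \<Rightarrow> complex^'n^'n \<Rightarrow> complex^'n^'n" where
  "gksl_dual H Ls A = mscale \<i> (commutator H A)
     + (\<Sum>L\<in>Ls. adjoint L ** A ** L - mscale (1/2) (anticommutator (adjoint L ** L) A))"

lemma mscale_sum: "mscale a (\<Sum>x\<in>S. f x) = (\<Sum>x\<in>S. mscale a (f x))"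
  by (simp add: vec_eq_iff mscale_def sum_distrib_left)

lemma gksl_add: "gksl H Ls (A + B) = gksl H Ls A + gksl H Ls B"
proof -
  have "L ** (A + B) ** adjoint L - mscale (1/2) (anticommutator (adjoint L ** L) (A + B))
      = (L ** A ** adjoint L - mscale (1/2) (anticommutator (adjoint L ** L) A))
      + (L ** B ** adjoint L - mscale (1/2) (anticommutator (adjoint L ** L) B))" for L
    by (simp add: anticommutator_def matrix_add_ldistrib matrix_add_rdistrib vec_eq_iff algebra_simps)
  note summand = this
  show ?thesis
    unfolding gksl_def summand sum.distrib
    by (simp add: commutator_def matrix_add_ldistrib matrix_add_rdistrib vec_eq_iff algebra_simps)
qed

lemma gksl_mscale: "gksl H Ls (mscale a A) = mscale a (gksl H Ls A)"
proof -
  have "L ** mscale a A ** adjoint L - mscale (1/2) (anticommutator (adjoint L ** L) (mscale a A))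
      = mscale a (L ** A ** adjoint L - mscale (1/2) (anticommutator (adjoint L ** L) A))" for L
    by (simp add: anticommutator_def mscale_matrix_mult matrix_mult_mscale vec_eq_iff algebra_simps)
  note summand = this
  show ?thesis
    unfolding gksl_def summand mscale_sum[symmetric]
    by (simp add: commutator_def mscale_matrix_mult matrix_mult_mscale vec_eq_iff algebra_simps)
qed

lemma linear_gksl: "linear (gksl H Ls)"
  by (rule linearI) (simp_all add: gksl_add gksl_mscale scaleR_eq_mscale)

lemma gksl_dual_add: "gksl_dual H Ls (A + B) = gksl_dual H Ls A + gksl_dual H Ls B"
proof -
  have "adjoint L ** (A + B) ** L - mscale (1/2) (anticommutator (adjoint L ** L) (A + B))
      = (adjoint L ** A ** L - mscale (1/2) (anticommutator (adjoint L ** L) A))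
      + (adjoint L ** B ** L - mscale (1/2) (anticommutator (adjoint L ** L) B))" for L
    by (simp add: anticommutator_def matrix_add_ldistrib matrix_add_rdistrib vec_eq_iff algebra_simps)
  note summand = this
  show ?thesis
    unfolding gksl_dual_def summand sum.distrib
    by (simp add: commutator_def matrix_add_ldistrib matrix_add_rdistrib vec_eq_iff algebra_simps)
qed

lemma gksl_dual_mscale: "gksl_dual H Ls (mscale a A) = mscale a (gksl_dual H Ls A)"
proof -
  have "adjoint L ** mscale a A ** L - mscale (1/2) (anticommutator (adjoint L ** L) (mscale a A))
      = mscale a (adjoint L ** A ** L - mscale (1/2) (anticommutator (adjoint L ** L) A))" for L
    by (simp add: anticommutator_def mscale_matrix_mult matrix_mult_mscale vec_eq_iff algebra_simps)
  note summand = this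
  show ?thesis
    unfolding gksl_dual_def summand mscale_sum[symmetric]
    by (simp add: commutator_def mscale_matrix_mult matrix_mult_mscale vec_eq_iff algebra_simps)
qed

lemma linear_gksl_dual: "linear (gksl_dual H Ls)"
  by (rule linearI) (simp_all add: gksl_dual_add gksl_dual_mscale scaleR_eq_mscale)

lemma gksl_dual_diff: "gksl_dual H Ls (A - B) = gksl_dual H Ls A - gksl_dual H Ls B"
proof -
  have "gksl_dual H Ls (A - B) = gksl_dual H Ls (A + mscale (-1) B)"
    by (rule arg_cong[where f = "gksl_dual H Ls"]) (simp add: vec_eq_iff)
  then show ?thesis
    unfolding gksl_dual_add gksl_dual_mscale by (simp add: vec_eq_iff)
qed

lemma gksl_dual_identity: "gksl_dual H Ls (mat 1) = 0"
  by (simp add: gksl_dual_def commutator_def anticommutator_def vec_eq_iff)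

lemma hs_inner_gksl:
  assumes "hermitian H"
  shows "hs_inner B (gksl H Ls A) = hs_inner (gksl_dual H Ls B) A"
proof -
  have H: "adjoint H = H"
    using assms by (simp add: hermitian_def)
  have hamiltonian: "hs_inner B (mscale (- \<i>) (commutator H A)) = hs_inner (mscale \<i> (commutator H B)) A"
    unfolding commutator_def hs_inner_mscale_left hs_inner_mscale_right hs_inner_diff_left
      hs_inner_diff_right hs_inner_mult_left[of B H A] hs_inner_mult_right[of B A H] H
    by simp
  have jump: "hs_inner B (L ** A ** adjoint L - mscale (1/2) (anticommutator (adjoint L ** L) A))
      = hs_inner (adjoint L ** B ** L - mscale (1/2) (anticommutator (adjoint L ** L) B)) A" for L
    unfolding anticommutator_def hs_inner_diff_left hs_inner_diff_right hs_inner_add_left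
      hs_inner_add_right hs_inner_mscale_left hs_inner_mscale_right
      hs_inner_mult_right[of B "L ** A"] hs_inner_mult_left[of _ L A]
      hs_inner_mult_left[of B "adjoint L ** L" A] hs_inner_mult_right[of B A]
    by (simp add: adjoint_mult matrix_mul_assoc)
  show ?thesis
    unfolding gksl_def gksl_dual_def hs_inner_add_left hs_inner_add_right
      hs_inner_sum_left hs_inner_sum_right jump hamiltonian ..
qed

lemma mtrace_gksl:
  assumes "hermitian H"
  shows "mtrace (gksl H Ls A) = 0"
proof -
  have "mtrace (gksl H Ls A) = hs_inner (gksl_dual H Ls (mat 1)) A"
    by (simp add: hs_inner_gksl[OF assms] flip: hs_inner_identity_left)
  then show ?thesis
    by (simp add: gksl_dual_identity hs_inner_def)
qed

lemma gksl_dual_adjoint: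
  assumes "hermitian H"
  shows "gksl_dual H Ls (adjoint A) = adjoint (gksl_dual H Ls A)"
proof -
  have H: "adjoint H = H"
    using assms by (simp add: hermitian_def)
  show ?thesis
    by (simp add: H gksl_dual_def commutator_def anticommutator_def adjoint_add adjoint_diff
        adjoint_mscale adjoint_sum adjoint_mult matrix_mul_assoc algebra_simps vec_eq_iff)
qed


definition gksl_drift :: "complex^'n^'n \<Rightarrow> (complex^'n^'n) set \<Rightarrow> complex^'n^'n" where
  "gksl_drift H Ls = mscale (- \<i>) H - mscale (1/2) (\<Sum>L\<in>Ls. adjoint L ** L)"

lemma gksl_eq_drift_jumps:
  assumes "hermitian H"
  shows "gksl H Ls A = gksl_drift H Ls ** A + A ** adjoint (gksl_drift H Ls) + (\<Sum>L\<in>Ls. L ** A ** adjoint L)"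
proof -
  have H: "adjoint H = H"
    using assms by (simp add: hermitian_def)
  show ?thesis
    by (simp add: gksl_def gksl_drift_def commutator_def anticommutator_def H add_divide_distrib sum.distrib adjoint_diff adjoint_mscale adjoint_sum
        adjoint_mult matrix_diff_ldistrib matrix_diff_rdistrib mscale_matrix_mult matrix_mult_mscale
        sum_matrix_mult matrix_mult_sum sum_subtractf mscale_sum vec_eq_iff algebra_simps)
qed

definition gksl_step :: "complex^'n^'n \<Rightarrow> (complex^'n^'n) set \<Rightarrow> real \<Rightarrow> complex^'n^'n \<Rightarrow> complex^'n^'n" where
  "gksl_step H Ls \<epsilon> A =
     (mat 1 + \<epsilon> *\<^sub>R gksl_drift H Ls) ** A ** adjoint (mat 1 + \<epsilon> *\<^sub>R gksl_drift H Ls)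
     + \<epsilon> *\<^sub>R (\<Sum>L\<in>Ls. L ** A ** adjoint L)"

lemma gksl_step_expand:
  assumes "hermitian H"
  shows "gksl_step H Ls \<epsilon> A = A + \<epsilon> *\<^sub>R gksl H Ls A
    + \<epsilon>\<^sup>2 *\<^sub>R (gksl_drift H Ls ** A ** adjoint (gksl_drift H Ls))"
  unfolding gksl_step_def gksl_eq_drift_jumps[OF assms] scaleR_eq_mscale
  by (simp add: adjoint_add adjoint_mscale matrix_add_ldistrib matrix_add_rdistrib mscale_matrix_mult
      matrix_mult_mscale matrix_mul_assoc vec_eq_iff algebra_simps power2_eq_square)

lemma hermitian_sum: "(\<And>x. x \<in> S \<Longrightarrow> hermitian (f x)) \<Longrightarrow> hermitian (\<Sum>x\<in>S. f x)"
  by (simp add: hermitian_def adjoint_sum)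

lemma hermitian_gksl_step: "hermitian A \<Longrightarrow> hermitian (gksl_step H Ls \<epsilon> A)"
  unfolding gksl_step_def scaleR_eq_mscale
  by (intro hermitian_add hermitian_real_mscale hermitian_sum hermitian_sandwich)

lemma positive_semidef_gksl_step:
  "positive_semidef A \<Longrightarrow> 0 \<le> \<epsilon> \<Longrightarrow> positive_semidef (gksl_step H Ls \<epsilon> A)"
  unfolding gksl_step_def scaleR_eq_mscale
  by (intro positive_semidef_add positive_semidef_real_mscale positive_semidef_sum positive_semidef_sandwich)

lemma mtrace_gksl_step:
  assumes "hermitian H"
  shows "mtrace (gksl_step H Ls \<epsilon> A)
    = mtrace A + \<epsilon>\<^sup>2 * mtrace (gksl_drift H Ls ** A ** adjoint (gksl_drift H Ls))"
  by (simp add: gksl_step_expand[OF assms] scaleR_eq_mscale mtrace_add mtrace_mscale mtrace_gksl[OF assms])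


lemma linear_gksl_step: "linear (gksl_step H Ls \<epsilon>)"
proof (rule linearI)
  show "gksl_step H Ls \<epsilon> (A + B) = gksl_step H Ls \<epsilon> A + gksl_step H Ls \<epsilon> B" for A B
    by (simp add: gksl_step_def matrix_add_ldistrib matrix_add_rdistrib sum.distrib scaleR_add_right)
  show "gksl_step H Ls \<epsilon> (r *\<^sub>R A) = r *\<^sub>R gksl_step H Ls \<epsilon> A" for r A
    by (simp add: gksl_step_def scaleR_eq_mscale mscale_matrix_mult matrix_mult_mscale mscale_sum
        vec_eq_iff algebra_simps sum_distrib_left)
qed

lemma linear_sandwich: "linear (\<lambda>A. B ** A ** (C :: complex^'n^'n))"
  by (rule linearI) (simp_all add: matrix_add_ldistrib matrix_add_rdistrib matrix_scalar_ac
      flip: scalar_matrix_assoc)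

lemma continuous_on_linear: "linear (f :: 'a::euclidean_space \<Rightarrow> 'b::real_normed_vector) \<Longrightarrow> continuous_on S f"
  by (simp add: linear_continuous_on linear_conv_bounded_linear)

lemma gksl_step_eigenvector_exists:
  fixes H :: "complex^'n^'n"
  assumes "hermitian H" "0 \<le> \<epsilon>"
  obtains \<rho> t where "density_matrix \<rho>" "gksl_step H Ls \<epsilon> \<rho> = t *\<^sub>R \<rho>"
proof -
  define D where "D = {B :: complex^'n^'n. density_matrix B}"
  define tr where "tr \<rho> = Re (mtrace (gksl_step H Ls \<epsilon> \<rho>))" for \<rho>
  have tr_ge: "1 \<le> tr \<rho>" if "\<rho> \<in> D" for \<rho>
  proof -
    have "0 \<le> Re (mtrace (gksl_drift H Ls ** \<rho> ** adjoint (gksl_drift H Ls)))"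
      using that by (simp add: D_def density_matrix_def positive_semidef_mtrace positive_semidef_sandwich)
    then show ?thesis
      using that by (simp add: tr_def D_def density_matrix_def mtrace_gksl_step[OF assms(1)])
  qed
  have step: "continuous_on D (gksl_step H Ls \<epsilon>)"
    by (rule continuous_on_linear[OF linear_gksl_step])
  then have "continuous_on D tr"
    unfolding tr_def mtrace_def by (intro continuous_intros)
  then have "continuous_on D (\<lambda>\<rho>. (1 / tr \<rho>) *\<^sub>R gksl_step H Ls \<epsilon> \<rho>)"
    using step tr_ge by (intro continuous_intros) force+
  moreover have "(\<lambda>\<rho>. (1 / tr \<rho>) *\<^sub>R gksl_step H Ls \<epsilon> \<rho>) \<in> D \<rightarrow> D"
  proof
    fix \<rho> assume "\<rho> \<in> D"
    then have "hermitian \<rho>" "positive_semidef \<rho>"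
      by (simp_all add: D_def density_matrix_def)
    then have "density_matrix ((1 / tr \<rho>) *\<^sub>R gksl_step H Ls \<epsilon> \<rho>)"
      unfolding tr_def using tr_ge[OF \<open>\<rho> \<in> D\<close>] assms(2)
      by (intro density_matrix_normalize hermitian_gksl_step positive_semidef_gksl_step) (auto simp: tr_def)
    then show "(1 / tr \<rho>) *\<^sub>R gksl_step H Ls \<epsilon> \<rho> \<in> D"
      by (simp add: D_def)
  qed
  ultimately obtain \<rho> where "\<rho> \<in> D" and fixed: "(1 / tr \<rho>) *\<^sub>R gksl_step H Ls \<epsilon> \<rho> = \<rho>"
    using brouwer[of D] compact_density_matrices convex_density_matrices density_matrix_ketbra
    unfolding D_def by blast
  have "gksl_step H Ls \<epsilon> \<rho> = tr \<rho> *\<^sub>R ((1 / tr \<rho>) *\<^sub>R gksl_step H Ls \<epsilon> \<rho>)"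
    using tr_ge[OF \<open>\<rho> \<in> D\<close>] by simp
  then have "gksl_step H Ls \<epsilon> \<rho> = tr \<rho> *\<^sub>R \<rho>"
    unfolding fixed .
  with \<open>\<rho> \<in> D\<close> show ?thesis
    using that by (simp add: D_def)
qed


lemma gksl_at_step_eigenvector:
  assumes "hermitian H" "density_matrix \<rho>" "0 < \<epsilon>" "gksl_step H Ls \<epsilon> \<rho> = t *\<^sub>R \<rho>"
  shows "gksl H Ls \<rho> = \<epsilon> *\<^sub>R (Re (mtrace (gksl_drift H Ls ** \<rho> ** adjoint (gksl_drift H Ls))) *\<^sub>R \<rho>
    - gksl_drift H Ls ** \<rho> ** adjoint (gksl_drift H Ls))"
proof -
  define S where "S = gksl_drift H Ls ** \<rho> ** adjoint (gksl_drift H Ls)"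
  have \<rho>: "hermitian \<rho>" "mtrace \<rho> = 1"
    using assms(2) by (simp_all add: density_matrix_def)
  have "of_real t = mtrace (t *\<^sub>R \<rho>)"
    using \<rho>(2) by (simp only: scaleR_eq_mscale mtrace_mscale mult_1_right)
  also have "\<dots> = 1 + \<epsilon>\<^sup>2 * mtrace S"
    by (simp only: assms(4) [symmetric] mtrace_gksl_step[OF assms(1)] \<rho>(2) S_def of_real_power)
  finally have "t = Re (1 + \<epsilon>\<^sup>2 * mtrace S)"
    by (metis Re_complex_of_real)
  then have t: "t = 1 + \<epsilon>\<^sup>2 * Re (mtrace S)"
    by (simp del: of_real_power)
  have "\<rho> + \<epsilon> *\<^sub>R gksl H Ls \<rho> + \<epsilon>\<^sup>2 *\<^sub>R S = t *\<^sub>R \<rho>"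
    using assms(4) unfolding gksl_step_expand[OF assms(1)] S_def .
  also have "\<dots> = \<rho> + \<epsilon>\<^sup>2 *\<^sub>R (Re (mtrace S) *\<^sub>R \<rho>)"
    unfolding t by (simp add: scaleR_add_left)
  finally have "\<rho> + \<epsilon> *\<^sub>R gksl H Ls \<rho> + \<epsilon>\<^sup>2 *\<^sub>R S = \<rho> + \<epsilon>\<^sup>2 *\<^sub>R (Re (mtrace S) *\<^sub>R \<rho>)" .
  then have "\<epsilon> *\<^sub>R gksl H Ls \<rho> + \<epsilon>\<^sup>2 *\<^sub>R S = \<epsilon>\<^sup>2 *\<^sub>R (Re (mtrace S) *\<^sub>R \<rho>)"
    by (simp add: add.assoc)
  then have "\<epsilon> *\<^sub>R gksl H Ls \<rho> = \<epsilon>\<^sup>2 *\<^sub>R (Re (mtrace S) *\<^sub>R \<rho> - S)"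
    by (simp add: scaleR_diff_right eq_diff_eq)
  then have "\<epsilon> *\<^sub>R gksl H Ls \<rho> = \<epsilon> *\<^sub>R (\<epsilon> *\<^sub>R (Re (mtrace S) *\<^sub>R \<rho> - S))"
    unfolding scaleR_scaleR power2_eq_square[symmetric] .
  then have "gksl H Ls \<rho> = \<epsilon> *\<^sub>R (Re (mtrace S) *\<^sub>R \<rho> - S) \<or> \<epsilon> = 0"
    by (simp only: scaleR_cancel_left)
  then show ?thesis
    using assms(3) unfolding S_def by (elim disjE) simp_all
qed

lemma gksl_stationary_exists:
  fixes H :: "complex^'n^'n"
  assumes "hermitian H"
  shows "\<exists>\<rho>. density_matrix \<rho> \<and> gksl H Ls \<rho> = 0"
proof -
  define D where "D = {B :: complex^'n^'n. density_matrix B}"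
  define S where "S \<rho> = gksl_drift H Ls ** \<rho> ** adjoint (gksl_drift H Ls)" for \<rho> :: "complex^'n^'n"
  have "compact D" "D \<noteq> {}"
    using compact_density_matrices density_matrix_ketbra by (auto simp: D_def)
  have S: "continuous_on D S"
    unfolding S_def by (intro continuous_on_linear linear_sandwich)
  have "continuous_on (S ` D) (\<lambda>A. Re (mtrace A))"
    unfolding mtrace_def by (intro continuous_intros)
  then have "continuous_on D (\<lambda>\<rho>. Re (mtrace (S \<rho>)))"
    using S by (rule continuous_on_compose2) simp
  then have "continuous_on D (\<lambda>\<rho>. Re (mtrace (S \<rho>)) *\<^sub>R \<rho> - S \<rho>)"
    by (rule continuous_on_diff[OF continuous_on_scaleR[OF _ continuous_on_id] S])
  then have "bounded ((\<lambda>\<rho>. Re (mtrace (S \<rho>)) *\<^sub>R \<rho> - S \<rho>) ` D)"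
    using \<open>compact D\<close> by (intro compact_imp_bounded compact_continuous_image)
  then obtain C where "0 < C" and C: "\<And>\<rho>. \<rho> \<in> D \<Longrightarrow> norm (Re (mtrace (S \<rho>)) *\<^sub>R \<rho> - S \<rho>) \<le> C"
    unfolding bounded_pos by blast
  have "continuous_on D (\<lambda>\<rho>. norm (gksl H Ls \<rho>))"
    by (intro continuous_on_norm continuous_on_linear linear_gksl)
  then obtain \<rho>0 where "\<rho>0 \<in> D" and min: "\<And>\<rho>. \<rho> \<in> D \<Longrightarrow> norm (gksl H Ls \<rho>0) \<le> norm (gksl H Ls \<rho>)"
    using continuous_attains_inf[OF \<open>compact D\<close> \<open>D \<noteq> {}\<close>] by blast
  have small: "norm (gksl H Ls \<rho>0) \<le> \<epsilon> * C" if \<epsilon>: "0 < \<epsilon>" for \<epsilon>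
  proof -
    obtain \<rho> t where \<rho>: "density_matrix \<rho>" "gksl_step H Ls \<epsilon> \<rho> = t *\<^sub>R \<rho>"
      by (rule gksl_step_eigenvector_exists[OF assms less_imp_le[OF \<epsilon>]])
    have "norm (gksl H Ls \<rho>0) \<le> norm (gksl H Ls \<rho>)"
      using min \<rho>(1) by (simp add: D_def)
    also have "\<dots> = \<epsilon> * norm (Re (mtrace (S \<rho>)) *\<^sub>R \<rho> - S \<rho>)"
      using \<epsilon> by (simp add: gksl_at_step_eigenvector[OF assms \<rho>(1) \<epsilon> \<rho>(2)] S_def)
    also have "\<dots> \<le> \<epsilon> * C"
      using C \<rho>(1) \<epsilon> by (simp add: D_def)
    finally show ?thesis .
  qed
  have "norm (gksl H Ls \<rho>0) \<le> 0"
  proof (rule field_le_epsilon)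
    fix e :: real
    assume "0 < e"
    then show "norm (gksl H Ls \<rho>0) \<le> 0 + e"
      using small[of "e / C"] \<open>0 < C\<close> by simp
  qed
  then show ?thesis
    using \<open>\<rho>0 \<in> D\<close> by (auto simp: D_def)
qed


lemma dim_kernel_le_dim_kernel_adjoint:
  fixes f g :: "'a::euclidean_space \<Rightarrow> 'a"
  assumes "linear f" and adj: "\<And>x y. inner (f x) y = inner x (g y)"
  shows "dim {y. g y = 0} \<le> dim {x. f x = 0}"
proof -
  define K where "K = {x. f x = 0}"
  define C where "C = {y. \<forall>x\<in>K. orthogonal x y}"
  have "subspace K"
    unfolding K_def using \<open>linear f\<close> by (rule linear_subspace_kernel)
  then have "dim {y \<in> UNIV. \<forall>x\<in>K. orthogonal x y} + dim K = dim (UNIV :: 'a set)"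
    by (intro dim_subspace_orthogonal_to_vectors) auto
  then have dimC: "dim C + dim K = DIM('a)"
    by (simp add: C_def)
  have "subspace C"
    unfolding C_def by (rule subspace_orthogonal_to_vectors)
  have "inj_on f (span C)"
  proof (rule inj_onI)
    fix a b assume "a \<in> span C" "b \<in> span C" "f a = f b"
    then have "a - b \<in> C" "a - b \<in> K"
      using \<open>subspace C\<close> linear_diff[OF \<open>linear f\<close>]
      by (simp_all add: span_eq_iff[THEN iffD2] subspace_diff K_def)
    then have "orthogonal (a - b) (a - b)"
      unfolding C_def by blast
    then show "a = b"
      by (simp only: orthogonal_self) simp
  qed
  then have "dim (f ` C) = dim C"
    by (rule dim_image_eq[OF \<open>linear f\<close>])
  moreover have "dim (f ` C \<union> {y. g y = 0}) = dim (f ` C) + dim {y. g y = 0}"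
    using adj by (intro dim_orthogonal_sum) auto
  moreover have "dim (f ` C \<union> {y. g y = 0}) \<le> DIM('a)"
    by (rule dim_subset_UNIV)
  ultimately show ?thesis
    using dimC by (simp add: K_def)
qed

lemma dim_le_2_if_scalar_multiples_of_identity:
  assumes "\<And>A. A \<in> V \<Longrightarrow> \<exists>a. A = mscale a (mat 1 :: complex^'n^'n)"
  shows "dim V \<le> 2"
proof -
  have "A \<in> span {mat 1, mscale \<i> (mat 1)}" if "A \<in> V" for A
  proof -
    obtain a where "A = mscale a (mat 1)"
      using assms \<open>A \<in> V\<close> by blast
    then have "A = Re a *\<^sub>R mat 1 + Im a *\<^sub>R mscale \<i> (mat 1)"
      by (simp add: scaleR_eq_mscale vec_eq_iff mat_def complex_eq_iff)
    then show ?thesis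
      by (metis span_add span_base span_scale insertI1 insertI2)
  qed
  then have "dim V \<le> card {mat 1 :: complex^'n^'n, mscale \<i> (mat 1)}"
    by (intro dim_le_card) auto
  also have "\<dots> \<le> 2"
    by (simp add: card_insert_if)
  finally show ?thesis .
qed


lemma density_matrix_unique_in_kernel:
  fixes T :: "complex^'n^'n \<Rightarrow> complex^'n^'n"
  assumes "linear T" "\<And>A. T (mscale \<i> A) = mscale \<i> (T A)" "dim {A. T A = 0} \<le> 2"
    and "density_matrix \<rho>" "density_matrix \<sigma>" "T \<rho> = 0" "T \<sigma> = 0"
  shows "\<sigma> = \<rho>"
proof -
  have \<rho>: "hermitian \<rho>" "mtrace \<rho> = 1" and \<sigma>: "hermitian \<sigma>" "mtrace \<sigma> = 1"
    using assms(4,5) by (simp_all add: density_matrix_def)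
  have "\<exists>j. \<rho> $ j $ j \<noteq> 0"
  proof (rule ccontr)
    assume "\<not> (\<exists>j. \<rho> $ j $ j \<noteq> 0)"
    then have "mtrace \<rho> = 0"
      by (simp add: mtrace_def)
    with \<rho>(2) show False
      by simp
  qed
  then obtain j where j: "\<rho> $ j $ j \<noteq> 0"
    by blast
  have "\<rho> \<notin> span {mscale \<i> \<rho>}"
  proof
    assume "\<rho> \<in> span {mscale \<i> \<rho>}"
    then obtain k where k: "\<rho> = k *\<^sub>R mscale \<i> \<rho>"
      by (auto simp: span_singleton)
    have "1 * \<rho> $ j $ j = (of_real k * \<i>) * \<rho> $ j $ j"
      by (subst (1) k) (simp add: scaleR_eq_mscale mult.assoc)
    then have "1 = of_real k * \<i>"
      using j by (rule mult_right_cancel[THEN iffD1, rotated])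
    then show False
      by (simp add: complex_eq_iff)
  qed
  moreover have "mscale \<i> \<rho> \<noteq> 0"
    using j by (auto simp: vec_eq_iff)
  ultimately have "dim {\<rho>, mscale \<i> \<rho>} = 2"
    by (simp add: dim_insert)
  moreover have "{\<rho>, mscale \<i> \<rho>} \<subseteq> {A. T A = 0}"
    using assms(2,6) by (simp add: vec_eq_iff)
  ultimately have "span {\<rho>, mscale \<i> \<rho>} = span {A. T A = 0}"
    using assms(3) by (intro dim_eq_span) auto
  then have "\<sigma> \<in> span {\<rho>, mscale \<i> \<rho>}"
    using assms(7) by (simp add: span_base)
  then obtain k l where "\<sigma> = k *\<^sub>R \<rho> + l *\<^sub>R mscale \<i> \<rho>"
    by (auto simp: span_breakdown_eq span_singleton) (metis add.commute diff_eq_eq)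
  then have \<sigma>_eq: "\<sigma> = mscale (of_real k + of_real l * \<i>) \<rho>"
    by (simp add: scaleR_eq_mscale vec_eq_iff algebra_simps)
  have "cnj ((of_real k + of_real l * \<i>) * \<rho> $ j $ j) = (of_real k + of_real l * \<i>) * \<rho> $ j $ j"
    using hermitian_diag[OF \<sigma>(1), of j] by (simp add: \<sigma>_eq)
  then have "l = 0"
    using j hermitian_diag[OF \<rho>(1), of j] by (simp add: complex_eq_iff)
  moreover have "k = 1"
    using \<sigma>(2) \<rho>(2) \<sigma>_eq \<open>l = 0\<close> by (simp add: mtrace_mscale)
  ultimately show ?thesis
    using \<sigma>_eq by (simp add: vec_eq_iff)
qed


lemma gksl_dual_kernel_invariant_under_jumps:
  assumes "finite Ls" "hermitian B" "positive_semidef B" "gksl_dual H Ls B = 0" "B *v y = 0" "L \<in> Ls"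
  shows "B *v (L *v y) = 0"
proof -
  have By: "cinner y (B *v x) = 0" for x
    using assms(2,5) by (simp add: cinner_adjoint hermitian_def)
  have jump: "cinner y ((adjoint L ** B ** L - mscale (1/2) (anticommutator (adjoint L ** L) B)) *v y)
      = cinner (L *v y) (B *v (L *v y))" for L
  proof -
    have "cinner y ((adjoint L ** B ** L) *v y) = cinner (L *v y) (B *v (L *v y))"
      by (simp add: cinner_adjoint[of y "adjoint L"] flip: matrix_vector_mul_assoc)
    moreover have "cinner y ((anticommutator (adjoint L ** L) B) *v y) = 0"
      by (simp add: anticommutator_def matrix_vector_mult_add_rdistrib cinner_add_right By assms(5)
          flip: matrix_vector_mul_assoc)
    ultimately show ?thesis
      by (simp add: matrix_vector_mult_diff_rdistrib cinner_diff_right mscale_matrix_vector_mult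
          cinner_scale_right)
  qed
  have hamiltonian: "cinner y ((mscale \<i> (commutator H B)) *v y) = 0"
    by (simp add: commutator_def mscale_matrix_vector_mult matrix_vector_mult_diff_rdistrib cinner_scale_right
        cinner_diff_right cinner_minus_right By assms(5) flip: matrix_vector_mul_assoc)
  have "cinner y (gksl_dual H Ls B *v y) = (\<Sum>L\<in>Ls. cinner (L *v y) (B *v (L *v y)))"
    unfolding gksl_dual_def matrix_vector_mult_add_rdistrib sum_matrix_vector_mult
      cinner_add_right cinner_sum_right jump hamiltonian add_0_left ..
  then have "(\<Sum>L\<in>Ls. Re (cinner (L *v y) (B *v (L *v y)))) = 0"
    using assms(4) by (simp flip: Re_sum)
  moreover have "\<forall>L\<in>Ls. 0 \<le> Re (cinner (L *v y) (B *v (L *v y)))"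
    using assms(3) by (simp add: positive_semidef_cinner)
  ultimately have "\<forall>L\<in>Ls. Re (cinner (L *v y) (B *v (L *v y))) = 0"
    by (simp add: sum_nonneg_eq_0_iff[OF assms(1)])
  then have "Re (cinner (L *v y) (B *v (L *v y))) = 0"
    using assms(6) by (rule bspec)
  then show ?thesis
    by (rule positive_semidef_kernel[OF assms(2,3)])
qed


lemma reaches_condensation_sink:
  fixes E :: "('v::finite \<times> 'v) set"
  shows "\<exists>x. (u, x) \<in> E\<^sup>* \<and> condensation_sink E (scc_of E x)"
proof -
  let ?R = "\<lambda>x. {y. (x, y) \<in> E\<^sup>*}"
  obtain x where ux: "(u, x) \<in> E\<^sup>* " and min: "\<And>y. (u, y) \<in> E\<^sup>* \<Longrightarrow> card (?R x) \<le> card (?R y)"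
    using ex_has_least_nat[of "\<lambda>x. (u, x) \<in> E\<^sup>* " u "\<lambda>x. card (?R x)"] by auto
  have returns: "(y, x) \<in> E\<^sup>* " if "(x, y) \<in> E\<^sup>* " for y
  proof -
    have "?R y \<subseteq> ?R x"
      using that by (auto intro: rtrancl_trans)
    moreover have "card (?R x) \<le> card (?R y)"
      using min ux that by (blast intro: rtrancl_trans)
    moreover have "card (?R y) \<le> card (?R x)"
      using \<open>?R y \<subseteq> ?R x\<close> by (intro card_mono) auto
    ultimately have "?R y = ?R x"
      by (intro card_subset_eq) auto
    then show ?thesis
      by auto
  qed
  have "condensation_sink E (scc_of E x)"
    unfolding condensation_sink_def sccs_def
  proof (intro conjI allI impI)
    fix v w assume "v \<in> scc_of E x \<and> (v, w) \<in> E"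
    then have "(x, w) \<in> E\<^sup>* "
      by (auto simp: scc_of_def)
    then show "w \<in> scc_of E x"
      using returns by (auto simp: scc_of_def)
  qed simp
  with ux show ?thesis
    by blast
qed

context
  fixes E :: "('v::finite \<times> 'v) set"
  assumes unique_sink: "\<exists>!C. condensation_sink E C"
begin

lemma condensation_sink_reachable:
  assumes "condensation_sink E S" "s \<in> S"
  shows "(u, s) \<in> E\<^sup>* "
proof -
  obtain x where "(u, x) \<in> E\<^sup>* " "condensation_sink E (scc_of E x)"
    using reaches_condensation_sink by blast
  moreover have "S = scc_of E x"
    using unique_sink assms(1) \<open>condensation_sink E (scc_of E x)\<close> by blast
  ultimately show ?thesis
    using assms(2) by (auto simp: scc_of_def intro: rtrancl_trans)
qed

lemma condensation_sink_nonempty: "condensation_sink E S \<Longrightarrow> S \<noteq> {}"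
  by (auto simp: condensation_sink_def sccs_def scc_of_def)

lemma condensation_sink_eq_if_no_out_arc:
  assumes "condensation_sink E S" "\<forall>w. (v, w) \<notin> E"
  shows "S = {v}"
proof -
  have "s = v" if "s \<in> S" for s
    using condensation_sink_reachable[OF assms(1) that, of v] assms(2)
    by (cases rule: converse_rtranclE) auto
  then show ?thesis
    using condensation_sink_nonempty[OF assms(1)] by blast
qed

end


definition graph_jumps :: "('v \<times> 'v) set \<Rightarrow> ('v \<times> 'v \<Rightarrow> complex) \<Rightarrow> (complex^'v^'v) set" where
  "graph_jumps E c = (\<lambda>(v, w). mscale (c (v, w)) (ketbra w v)) ` E"

context
  fixes E :: "('v::finite \<times> 'v) set" and c :: "'v \<times> 'v \<Rightarrow> complex"
  assumes unique_sink: "\<exists>!C. condensation_sink E C"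
    and jump_nonzero: "\<forall>e\<in>E. c e \<noteq> 0"
begin

lemma graph_dual_kernel_step:
  assumes "hermitian B" "positive_semidef B" "gksl_dual H (graph_jumps E c) B = 0"
    and "B *v y = 0" "(v, w) \<in> E" "y $ v \<noteq> 0"
  shows "B *v axis w 1 = 0"
proof -
  have "B *v (mscale (c (v, w)) (ketbra w v) *v y) = 0"
    using assms(5) by (intro gksl_dual_kernel_invariant_under_jumps[OF _ assms(1-4)])
      (auto simp: graph_jumps_def)
  then have "(c (v, w) * y $ v) *s (B *v axis w 1) = 0"
    by (simp add: mscale_matrix_vector_mult matrix_vector_mult_ketbra matrix_vector_mult_scale
        vector_smult_assoc)
  then show ?thesis
    using jump_nonzero assms(5,6) by (auto simp: vec_eq_iff)
qed

lemma graph_dual_kernel_sink: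
  assumes "hermitian B" "positive_semidef B" "gksl_dual H (graph_jumps E c) B = 0"
    and "B *v y = 0" "y \<noteq> 0" "condensation_sink E S" "s \<in> S"
  shows "B *v axis s 1 = 0"
proof -
  define T where "T = {u. B *v axis u 1 = 0}"
  have step: "w \<in> T" if "u \<in> T" "(u, w) \<in> E" for u w
    using graph_dual_kernel_step[OF assms(1-3), of "axis u 1" u w] that by (simp add: T_def)
  obtain t where "t \<in> T"
  proof (cases "\<exists>u w. y $ u \<noteq> 0 \<and> (u, w) \<in> E")
    case True
    then obtain u w where "y $ u \<noteq> 0" "(u, w) \<in> E"
      by blast
    then have "w \<in> T"
      using graph_dual_kernel_step[OF assms(1-4)] by (simp add: T_def)
    then show ?thesis
      by (rule that)
  next
    case False
    obtain v where "y $ v \<noteq> 0"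
      using assms(5) by (auto simp: vec_eq_iff)
    have "u = v" if "y $ u \<noteq> 0" for u
      using condensation_sink_eq_if_no_out_arc[OF unique_sink assms(6)] False that \<open>y $ v \<noteq> 0\<close>
      by blast
    then have "y = (y $ v) *s axis v 1"
      by (auto simp: vec_eq_iff axis_def)
    then have "(y $ v) *s (B *v axis v 1) = 0"
      using assms(4) by (metis matrix_vector_mult_scale)
    then show ?thesis
      using that \<open>y $ v \<noteq> 0\<close> by (auto simp: T_def vec_eq_iff)
  qed
  have "(t, s) \<in> E\<^sup>* "
    by (rule condensation_sink_reachable[OF unique_sink assms(6,7)])
  then have "s \<in> T"
    using \<open>t \<in> T\<close> by (induction rule: rtrancl_induct) (auto intro: step)
  then show ?thesis
    by (simp add: T_def)
qed

lemma hermitian_graph_dual_kernel: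
  assumes "hermitian A" "gksl_dual H (graph_jumps E c) A = 0"
  shows "\<exists>\<mu>::real. A = \<mu> *\<^sub>R mat 1"
proof -
  obtain S where "condensation_sink E S"
    using unique_sink by blast
  moreover obtain s where "s \<in> S"
    using condensation_sink_nonempty[OF unique_sink \<open>condensation_sink E S\<close>] by blast
  ultimately have S: "condensation_sink E S" "s \<in> S" .
  have dual_shift: "gksl_dual H (graph_jumps E c) (r *\<^sub>R mat 1 - X) = 0"
    if "gksl_dual H (graph_jumps E c) X = 0" for r X
    using that by (simp add: gksl_dual_diff scaleR_eq_mscale gksl_dual_mscale gksl_dual_identity)
  have hermitian_shift: "hermitian (r *\<^sub>R mat 1 - X)" if "hermitian X" for r X
    using that by (simp add: hermitian_def adjoint_diff scaleR_eq_mscale adjoint_mscale)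
  obtain \<mu> x where "x \<noteq> 0" "positive_semidef (\<mu> *\<^sub>R mat 1 - A)" "(\<mu> *\<^sub>R mat 1 - A) *v x = 0"
    using hermitian_top_eigenvalue[OF assms(1)] .
  then have B1: "(\<mu> *\<^sub>R mat 1 - A) *v axis s 1 = 0"
    using graph_dual_kernel_sink[OF hermitian_shift[OF assms(1)] _ dual_shift[OF assms(2)] _ _ S] by blast
  have "- A = mscale (-1) A"
    by (simp add: vec_eq_iff)
  then have "hermitian (- A)" "gksl_dual H (graph_jumps E c) (- A) = 0"
    using assms by (simp_all add: hermitian_def adjoint_mscale gksl_dual_mscale)
  obtain \<nu> z where "z \<noteq> 0" "positive_semidef (\<nu> *\<^sub>R mat 1 - - A)" "(\<nu> *\<^sub>R mat 1 - - A) *v z = 0"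
    using hermitian_top_eigenvalue[OF \<open>hermitian (- A)\<close>] .
  then have B2: "(\<nu> *\<^sub>R mat 1 - - A) *v axis s 1 = 0"
    using graph_dual_kernel_sink[OF hermitian_shift[OF \<open>hermitian (- A)\<close>] _
        dual_shift[OF \<open>gksl_dual H (graph_jumps E c) (- A) = 0\<close>] _ _ S] by blast
  have "((\<mu> + \<nu>) *\<^sub>R mat 1) *v axis s 1 = (\<mu> *\<^sub>R mat 1 - A) *v axis s 1 + (\<nu> *\<^sub>R mat 1 - - A) *v axis s 1"
    by (simp add: algebra_simps scaleR_add_left)
  then have "(((\<mu> + \<nu>) *\<^sub>R mat 1) *v axis s 1) $ s = (0 :: complex)"
    using B1 B2 by simp
  then have "\<nu> = - \<mu>"
    by (simp add: matrix_vector_mult_axis mat_def)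
  then have "positive_semidef (- (\<mu> *\<^sub>R mat 1 - A))"
    using \<open>positive_semidef (\<nu> *\<^sub>R mat 1 - - A)\<close> by simp
  then have "\<mu> *\<^sub>R mat 1 - A = 0"
    using \<open>positive_semidef (\<mu> *\<^sub>R mat 1 - A)\<close> assms(1)
    by (intro positive_semidef_antisym hermitian_shift)
  then show ?thesis
    by auto
qed

lemma graph_dual_kernel:
  assumes "hermitian H" "gksl_dual H (graph_jumps E c) A = 0"
  shows "\<exists>a. A = mscale a (mat 1)"
proof -
  define R where "R = mscale (1/2) (A + adjoint A)"
  define J where "J = mscale (- \<i> / 2) (A - adjoint A)"
  have "gksl_dual H (graph_jumps E c) (adjoint A) = 0"
    using assms by (simp add: gksl_dual_adjoint vec_eq_iff)
  then have "gksl_dual H (graph_jumps E c) R = 0" "gksl_dual H (graph_jumps E c) J = 0"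
    using assms(2) by (simp_all add: R_def J_def gksl_dual_mscale gksl_dual_add gksl_dual_diff)
  moreover have "hermitian R" "hermitian J"
    by (simp_all add: R_def J_def hermitian_def vec_eq_iff algebra_simps)
  ultimately obtain r j :: real where "R = r *\<^sub>R mat 1" "J = j *\<^sub>R mat 1"
    using hermitian_graph_dual_kernel by metis
  moreover have "A = R + mscale \<i> J"
    by (simp add: R_def J_def vec_eq_iff algebra_simps)
  ultimately have "A = mscale (of_real r + \<i> * of_real j) (mat 1)"
    by (simp add: scaleR_eq_mscale vec_eq_iff algebra_simps)
  then show ?thesis ..
qed

end

theorem theorem2:
  fixes E :: "('v::finite \<times> 'v) set"
    and c :: "'v \<times> 'v \<Rightarrow> complex"
    and H :: "complex^'v^'v"
  assumes "weakly_connected E"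
    and "\<exists>!C. condensation_sink E C"
    and "\<forall>e\<in>E. c e \<noteq> 0"
    and "hermitian H"
  shows "relaxing H ((\<lambda>(v, w). mscale (c (v, w)) (ketbra w v)) ` E)"
proof -
  have Ls: "(\<lambda>(v, w). mscale (c (v, w)) (ketbra w v)) ` E = graph_jumps E c"
    by (simp add: graph_jumps_def)
  obtain \<rho> where \<rho>: "density_matrix \<rho>" "gksl H (graph_jumps E c) \<rho> = 0"
    using gksl_stationary_exists[OF assms(4)] by blast
  have "dim {A. gksl H (graph_jumps E c) A = 0} \<le> dim {A. gksl_dual H (graph_jumps E c) A = 0}"
    by (rule dim_kernel_le_dim_kernel_adjoint[OF linear_gksl_dual])
      (simp add: inner_eq_Re_hs_inner hs_inner_gksl[OF assms(4)])
  also have "\<dots> \<le> 2"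
    using graph_dual_kernel[OF assms(2,3,4)] by (intro dim_le_2_if_scalar_multiples_of_identity) blast
  finally have "dim {A. gksl H (graph_jumps E c) A = 0} \<le> 2" .
  then have "\<sigma> = \<rho>" if "density_matrix \<sigma>" "gksl H (graph_jumps E c) \<sigma> = 0" for \<sigma>
    using density_matrix_unique_in_kernel[OF linear_gksl gksl_mscale _ \<rho>(1) that(1) \<rho>(2) that(2)] by blast
  then show ?thesis
    unfolding relaxing_def stationary_state_def Ls using \<rho> by blast
qed

end
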